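(* Let $n\geq 1$ and let $C$ be an all-ones CRC in $G_n$ with $\mathbf{0}\in C$ and $-e_n\in C$. Then: (1) for every slice pair $\{x,x-e_n\}$ there is $i\in\{0,\ldots,\rho\}$ with $x,x-e_n\in C_i$; (2) if an $n$-line contains words of $C_i$, then the words of $C_i$ on that line form a set invariant under translation by $\pm 4e_n$ and are a union of slice pairs; in particular every $n$-line is a union of slice pairs, which lie alternately in $C_i$ and $C_{i+1}$ for some $i\in\{0,\ldots,\rho-1\}$.
   Context: $G_n$: vertex set $\mathbb{Z}^n$, $x\sim y$ iff $\sum_i|x_i-y_i|=1$; $e_i$ is the $i$-th unit vector, $\mathbf{0}$ the all-zero word. For a code $C$ with covering radius $\rho$, $C_i=\{v:d(v,C)=i\}$. $C$ is a CRC if for all $i,j$ every vertex of $C_i$ has the same number $\alpha_{ij}$ of neighbours in $C_j$, with $\alpha_{ij}=0$ for $|i-j|>1$; $a_i=\alpha_{ii}$, $b_i=\alpha_{i,i+1}$, $c_i=\alpha_{i,i-1}$. $C$ is all-ones if $a_i=1$ for all $i=0,\ldots,\rho$. For $s\in\mathbb{Z}$, the $s$-slice is $\{x\in\mathbb{Z}^n: x_n\in\{2s,2s-1\}\}$; a slice pair is a pair $\{x,x-e_n\}$ with $x_n=2s$ for some $s$ (both in the $s$-slice). An $n$-line is a set $\{x+te_n:t\in\mathbb{Z}\}$. *)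

theory Defs
  imports Main
begin

text \<open>Vertices of G_n are integer lists of length n; coordinate i (1-based in the paper)
  is list index i-1, so e_n is the unit vector at index n-1.\<close>

definition vtx :: "nat \<Rightarrow> int list set" where
  "vtx n = {x. length x = n}"

definition adjG :: "nat \<Rightarrow> int list \<Rightarrow> int list \<Rightarrow> bool" where
  "adjG n x y \<longleftrightarrow> length x = n \<and> length y = n \<and> (\<Sum>i<n. \<bar>x ! i - y ! i\<bar>) = 1"

definition unitv :: "nat \<Rightarrow> nat \<Rightarrow> int list" where
  "unitv n k = map (\<lambda>j. if j = k then 1 else 0) [0..<n]"

definition vadd :: "int list \<Rightarrow> int list \<Rightarrow> int list" where
  "vadd x y = map2 (+) x y"

definition smul :: "int \<Rightarrow> int list \<Rightarrow> int list" where
  "smul t x = map (\<lambda>a. t * a) x"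

definition gdist :: "nat \<Rightarrow> int list \<Rightarrow> int list \<Rightarrow> nat" where
  "gdist n u v = (LEAST k. (adjG n ^^ k) u v)"

definition dcode :: "nat \<Rightarrow> int list set \<Rightarrow> int list \<Rightarrow> nat" where
  "dcode n C v = (LEAST k. \<exists>c\<in>C. gdist n v c = k)"

definition layer :: "nat \<Rightarrow> int list set \<Rightarrow> nat \<Rightarrow> int list set" where
  "layer n C i = {v \<in> vtx n. dcode n C v = i}"

definition covering_radius :: "nat \<Rightarrow> int list set \<Rightarrow> nat \<Rightarrow> bool" where
  "covering_radius n C \<rho> \<longleftrightarrow> (\<forall>v\<in>vtx n. dcode n C v \<le> \<rho>) \<and> (\<exists>v\<in>vtx n. dcode n C v = \<rho>)"

definition nbrs_in :: "nat \<Rightarrow> int list \<Rightarrow> int list set \<Rightarrow> nat" where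
  "nbrs_in n v A = card {y \<in> A. adjG n v y}"

definition is_CRC :: "nat \<Rightarrow> int list set \<Rightarrow> nat \<Rightarrow> bool" where
  "is_CRC n C \<rho> \<longleftrightarrow> C \<subseteq> vtx n \<and> C \<noteq> {} \<and> covering_radius n C \<rho> \<and>
     (\<forall>i\<le>\<rho>. \<forall>j\<le>\<rho>. \<exists>\<alpha>. (\<forall>v\<in>layer n C i. nbrs_in n v (layer n C j) = \<alpha>) \<and>
        (nat \<bar>int i - int j\<bar> > 1 \<longrightarrow> \<alpha> = 0))"

definition all_ones_CRC :: "nat \<Rightarrow> int list set \<Rightarrow> nat \<Rightarrow> bool" where
  "all_ones_CRC n C \<rho> \<longleftrightarrow> is_CRC n C \<rho> \<and>
     (\<forall>i\<le>\<rho>. \<forall>v\<in>layer n C i. nbrs_in n v (layer n C i) = 1)"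

definition nline :: "nat \<Rightarrow> int list \<Rightarrow> int list set" where
  "nline n x = {vadd x (smul t (unitv n (n - 1))) | t. True}"

definition partner :: "nat \<Rightarrow> int list \<Rightarrow> int list" where
  "partner n x = (if even (x ! (n - 1)) then vadd x (smul (-1) (unitv n (n - 1)))
                  else vadd x (unitv n (n - 1)))"

end

theory Submission
  imports Defs
begin

(* In an all-ones CRC every vertex v has exactly one neighbour in its own layer, its mate.
   Mateship propagates sideways: if v and w = v +- e_k are mates and j ~= k, then v +- e_j and
   w +- e_j leave the common layer in the same direction, hence are mates again. Starting from
   the mates 0 and -e_n and moving through the other coordinates, x and x - e_n are mates
   whenever x_n = 0, and a reflection argument along e_n extends this to every even x_n: this
   is (1). Consecutive slice pairs on an n-line therefore lie in adjacent layers. Comparing the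
   numbers of upward neighbours (both equal to b_i) of the two words of a slice pair shows that
   the two slice pairs flanking it lie on the same side of it, so the layers along an n-line
   alternate with period two slice pairs, which gives (2). *)

definition shift_coord :: "int list \<Rightarrow> nat \<Rightarrow> int \<Rightarrow> int list" where
  "shift_coord v k t = v[k := v ! k + t]"

lemma length_shift_coord [simp]: "length (shift_coord v k t) = length v"
  by (simp add: shift_coord_def)

lemma nth_shift_coord:
  "k < length v \<Longrightarrow> shift_coord v k t ! i = (if i = k then v ! k + t else v ! i)"
  by (simp add: shift_coord_def nth_list_update)

lemma shift_coord_0 [simp]: "shift_coord v k 0 = v"
  by (simp add: shift_coord_def)

lemma shift_coord_list_update [simp]:
  "k < length x \<Longrightarrow> shift_coord (x[k := a]) k t = x[k := a + t]"
  by (simp add: shift_coord_def)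

lemma shift_coord_commute:
  "k < length v \<Longrightarrow> k' < length v \<Longrightarrow>
    shift_coord (shift_coord v k s) k' t = shift_coord (shift_coord v k' t) k s"
  by (rule nth_equalityI) (auto simp: nth_shift_coord)

lemma shift_coord_shift_coord:
  "k < length v \<Longrightarrow> shift_coord (shift_coord v k s) k t = shift_coord v k (s + t)"
  by (rule nth_equalityI) (auto simp: nth_shift_coord)

lemma shift_coord_cancel:
  assumes "k < length y" "length y = length y'" "shift_coord y k t = shift_coord y' k t"
  shows "y = y'"
proof (rule nth_equalityI)
  fix i assume "i < length y"
  then show "y ! i = y' ! i"
    using assms nth_shift_coord[of k y t i] nth_shift_coord[of k y' t i] by (auto split: if_splits)
qed (use assms in simp)

lemma shift_coord_neq:
  assumes "k < length v" "k' < length v" "k \<noteq> k'" "s \<noteq> 0"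
  shows "shift_coord v k s \<noteq> shift_coord v k' s'"
proof
  assume "shift_coord v k s = shift_coord v k' s'"
  then have "shift_coord v k s ! k = shift_coord v k' s' ! k" by simp
  with assms show False by (simp add: nth_shift_coord)
qed

lemma vadd_smul_unitv:
  "length x = n \<Longrightarrow> k < n \<Longrightarrow> vadd x (smul t (unitv n k)) = shift_coord x k t"
  by (rule nth_equalityI) (auto simp: vadd_def smul_def unitv_def shift_coord_def nth_list_update)

lemma vadd_unitv: "length x = n \<Longrightarrow> k < n \<Longrightarrow> vadd x (unitv n k) = shift_coord x k 1"
  using vadd_smul_unitv[of x n k 1] by (simp add: smul_def)

lemma adjG_sym: "adjG n x y \<Longrightarrow> adjG n y x"
  unfolding adjG_def by (simp add: abs_minus_commute)

lemma adjG_shift_coord: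
  assumes "length v = n" "k < n" "s = 1 \<or> s = -1"
  shows "adjG n v (shift_coord v k s)"
proof -
  have "(\<Sum>i<n. \<bar>v ! i - shift_coord v k s ! i\<bar>) = (\<Sum>i<n. if i = k then 1 else 0)"
    by (rule sum.cong) (use assms in \<open>auto simp: nth_shift_coord\<close>)
  also have "\<dots> = 1" using assms by simp
  finally show ?thesis using assms by (simp add: adjG_def)
qed

lemma adjG_imp_shift_coord:
  assumes "adjG n v y"
  obtains k s where "k < n" "s = 1 \<or> s = -1" "y = shift_coord v k s"
proof -
  from assms have len: "length v = n" "length y = n"
    and sum1: "(\<Sum>i<n. \<bar>v ! i - y ! i\<bar>) = 1"
    by (auto simp: adjG_def)
  obtain k where k: "k < n" "v ! k \<noteq> y ! k"
    using sum1 by (metis (no_types, lifting) lessThan_iff sum.neutral abs_0 diff_self zero_neq_one)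
  have "(\<Sum>i<n. \<bar>v ! i - y ! i\<bar>) = \<bar>v ! k - y ! k\<bar> + (\<Sum>i\<in>{..<n} - {k}. \<bar>v ! i - y ! i\<bar>)"
    using k by (simp add: sum.remove)
  moreover have "(\<Sum>i\<in>{..<n} - {k}. \<bar>v ! i - y ! i\<bar>) \<ge> 0" by (simp add: sum_nonneg)
  moreover have "\<bar>v ! k - y ! k\<bar> \<ge> 1" using k by auto
  ultimately have step: "\<bar>v ! k - y ! k\<bar> = 1"
    and rest: "(\<Sum>i\<in>{..<n} - {k}. \<bar>v ! i - y ! i\<bar>) = 0"
    using sum1 by linarith+
  from rest have "\<And>i. i < n \<Longrightarrow> i \<noteq> k \<Longrightarrow> y ! i = v ! i"
    by (subst (asm) sum_nonneg_eq_0_iff) auto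
  then have "y = shift_coord v k (y ! k - v ! k)"
    by (intro nth_equalityI) (auto simp: len k nth_shift_coord)
  moreover have "y ! k - v ! k = 1 \<or> y ! k - v ! k = -1" using step by auto
  ultimately show ?thesis using k that by blast
qed

lemma finite_adjG: "finite {y. adjG n v y}"
proof -
  have "{y. adjG n v y} \<subseteq> (\<lambda>(k, s). shift_coord v k s) ` ({..<n} \<times> {1, -1})"
    by (auto elim!: adjG_imp_shift_coord)
  then show ?thesis by (rule finite_subset) auto
qed

locale all_ones_crc =
  fixes n \<rho> :: nat and C :: "int list set"
  assumes all_ones: "all_ones_CRC n C \<rho>"
begin

abbreviation lev :: "int list \<Rightarrow> nat" where
  "lev \<equiv> dcode n C"

definition mates :: "int list \<Rightarrow> int list \<Rightarrow> bool" where
  "mates v w \<longleftrightarrow> adjG n v w \<and> lev v = lev w"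

lemma CRC_code: "is_CRC n C \<rho>"
  using all_ones by (simp add: all_ones_CRC_def)

lemma lev_le_radius: "length v = n \<Longrightarrow> lev v \<le> \<rho>"
  using CRC_code by (auto simp: is_CRC_def covering_radius_def vtx_def)

lemma mem_layer_iff: "v \<in> layer n C i \<longleftrightarrow> length v = n \<and> lev v = i"
  by (simp add: layer_def vtx_def)

lemma nbrs_in_layer: "nbrs_in n v (layer n C j) = card {y. adjG n v y \<and> lev y = j}"
  unfolding nbrs_in_def by (rule arg_cong[where f = card]) (auto simp: layer_def vtx_def adjG_def)

lemma lev_code: "c \<in> C \<Longrightarrow> lev c = 0"
  unfolding dcode_def
  by (rule Least_eq_0) (auto simp: gdist_def intro!: bexI[of _ c] Least_eq_0 relpowp_0_I)

lemma layer_regular: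
  assumes "i \<le> \<rho>" "j \<le> \<rho>"
  obtains \<alpha> where "\<forall>v\<in>layer n C i. nbrs_in n v (layer n C j) = \<alpha>"
    and "nat \<bar>int i - int j\<bar> > 1 \<longrightarrow> \<alpha> = 0"
proof -
  have "\<exists>\<alpha>. (\<forall>v\<in>layer n C i. nbrs_in n v (layer n C j) = \<alpha>)
      \<and> (nat \<bar>int i - int j\<bar> > 1 \<longrightarrow> \<alpha> = 0)"
    using CRC_code assms unfolding is_CRC_def by (elim conjE) simp
  then show ?thesis using that by blast
qed

lemma card_nbrs_eq:
  assumes "length u = n" "length u' = n" "lev u = lev u'" "j \<le> \<rho>"
  shows "card {y. adjG n u y \<and> lev y = j} = card {y. adjG n u' y \<and> lev y = j}"
proof -
  obtain \<alpha> where "\<forall>v\<in>layer n C (lev u). nbrs_in n v (layer n C j) = \<alpha>"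
    using layer_regular[OF lev_le_radius[OF assms(1)] assms(4)] by blast
  then show ?thesis using assms by (simp add: mem_layer_iff nbrs_in_layer)
qed

lemma lev_adjG_le:
  assumes adj: "adjG n v y"
  shows "lev y \<le> lev v + 1"
proof (rule ccontr)
  assume far: "\<not> lev y \<le> lev v + 1"
  have len: "length v = n" "length y = n" using adj by (auto simp: adjG_def)
  obtain \<alpha> where count: "\<forall>u\<in>layer n C (lev v). nbrs_in n u (layer n C (lev y)) = \<alpha>"
    and gap: "nat \<bar>int (lev v) - int (lev y)\<bar> > 1 \<longrightarrow> \<alpha> = 0"
    using layer_regular[OF lev_le_radius[OF len(1)] lev_le_radius[OF len(2)]] .
  have "\<alpha> = 0" using gap far by linarith
  moreover have "v \<in> layer n C (lev v)" using len by (simp add: mem_layer_iff)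
  ultimately have "card {y'. adjG n v y' \<and> lev y' = lev y} = 0"
    using count by (simp add: nbrs_in_layer)
  moreover have "finite {y'. adjG n v y' \<and> lev y' = lev y}"
    by (rule finite_subset[OF _ finite_adjG[of n v]]) auto
  ultimately show False using adj by auto
qed

lemma lev_adjG: "adjG n v y \<Longrightarrow> lev y \<le> lev v + 1 \<and> lev v \<le> lev y + 1"
  using lev_adjG_le adjG_sym by blast

lemma card_mates:
  assumes "length v = n"
  shows "card {y. adjG n v y \<and> lev y = lev v} = 1"
proof -
  have "\<forall>i\<le>\<rho>. \<forall>u\<in>layer n C i. nbrs_in n u (layer n C i) = 1"
    using all_ones unfolding all_ones_CRC_def by (elim conjE)
  then have "nbrs_in n v (layer n C (lev v)) = 1"
    using assms lev_le_radius[OF assms] by (simp add: mem_layer_iff)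
  then show ?thesis by (simp add: nbrs_in_layer)
qed

lemma mates_exists:
  assumes "length v = n"
  obtains w where "mates v w"
proof -
  obtain x where "{y. adjG n v y \<and> lev y = lev v} = {x}"
    using card_mates[OF assms] card_1_singletonE by blast
  then have "x \<in> {y. adjG n v y \<and> lev y = lev v}" by simp
  then have "mates v x" by (simp add: mates_def)
  then show ?thesis by (rule that)
qed

lemma mates_unique:
  assumes "mates v w" "mates v w'"
  shows "w = w'"
proof -
  have "length v = n" using assms by (simp add: mates_def adjG_def)
  then obtain x where S: "{y. adjG n v y \<and> lev y = lev v} = {x}"
    using card_mates card_1_singletonE by blast
  have "w \<in> {y. adjG n v y \<and> lev y = lev v}" "w' \<in> {y. adjG n v y \<and> lev y = lev v}"
    using assms by (auto simp: mates_def)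
  then show ?thesis unfolding S by simp
qed

lemma mates_sym: "mates v w \<Longrightarrow> mates w v"
  by (simp add: mates_def adjG_sym)

text \<open>Both translates leave the common layer of v and w, and in the same direction, because they
  are adjacent to each other while the two possible levels lev v \<plusminus> 1 are two apart.\<close>

lemma mates_shift_coord:
  assumes mates: "mates v w" and w: "w = shift_coord v k t"
    and k: "k < n" and t: "t = 1 \<or> t = -1" and j: "j < n" "j \<noteq> k" and s: "s = 1 \<or> s = -1"
  shows "mates (shift_coord v j s) (shift_coord w j s)"
proof -
  have len: "length v = n" using mates by (simp add: mates_def adjG_def)
  define u where "u = shift_coord v j s"
  define u' where "u' = shift_coord w j s"
  have u'_eq: "u' = shift_coord u k t"
    unfolding u_def u'_def w using shift_coord_commute k j len by simp
  have adj_vu: "adjG n v u" unfolding u_def using adjG_shift_coord[OF len j(1) s] .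
  have adj_wu': "adjG n w u'" unfolding u'_def using len j s w by (intro adjG_shift_coord) auto
  have adj_uu': "adjG n u u'" unfolding u'_eq using len k t u_def by (intro adjG_shift_coord) auto
  have "lev u \<noteq> lev v"
  proof
    assume "lev u = lev v"
    then have "u = w" using mates_unique[OF _ mates] adj_vu by (simp add: mates_def)
    then show False using shift_coord_neq[of j v k s t] u_def w len k j s by auto
  qed
  moreover have "lev u' \<noteq> lev w"
  proof
    assume "lev u' = lev w"
    then have "u' = v"
      using mates_unique[OF _ mates_sym[OF mates]] adj_wu' by (simp add: mates_def)
    moreover have "u' ! j = v ! j + s"
      unfolding u'_def w using len k j by (simp add: nth_shift_coord)
    ultimately show False using s by simp
  qed
  moreover have "lev w = lev v" using mates by (simp add: mates_def)
  ultimately have "lev u = lev u'"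
    using lev_adjG[OF adj_vu] lev_adjG[OF adj_wu'] lev_adjG[OF adj_uu'] by linarith
  then show ?thesis using adj_uu' unfolding mates_def u_def u'_def by simp
qed

lemma mates_reflect:
  assumes mates: "mates v (shift_coord v k t)" and k: "k < n" and t: "t = 1 \<or> t = -1"
  shows "mates (shift_coord v k (-t)) (shift_coord v k (-2 * t))"
proof -
  have len: "length v = n" using mates by (simp add: mates_def adjG_def)
  define w where "w = shift_coord v k (-t)"
  have len_w: "length w = n" using len by (simp add: w_def)
  have w_back: "shift_coord w k t = v"
    unfolding w_def using len k by (simp add: shift_coord_shift_coord)
  obtain p where mates_wp: "mates w p" using mates_exists[OF len_w] .
  then have "adjG n w p" by (simp add: mates_def)
  then obtain j s where j: "j < n" and s: "s = 1 \<or> s = -1" and p: "p = shift_coord w j s"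
    by (rule adjG_imp_shift_coord)
  have "s = t \<or> s = -t" using s t by auto
  then consider "j = k" "s = t" | "j = k" "s = -t" | "j \<noteq> k" by blast
  then show ?thesis
  proof cases
    case 1
    then have "mates v w" using mates_sym[OF mates_wp] p w_back by simp
    then have "w = shift_coord v k t" using mates_unique mates by blast
    then have "w ! k = shift_coord v k t ! k" by simp
    then show ?thesis using len k t by (simp add: w_def nth_shift_coord)
  next
    case 2
    then show ?thesis using mates_wp p len k by (simp add: w_def shift_coord_shift_coord)
  next
    case 3
    have "mates (shift_coord w k t) (shift_coord p k t)"
      using mates_shift_coord[OF mates_wp p j s k _ t] 3 by simp
    moreover have "shift_coord p k t = shift_coord v j s"
      unfolding p using shift_coord_commute[of j w k s t] j len_w k w_back by simp
    ultimately have "shift_coord v j s = shift_coord v k t" using mates w_back mates_unique by auto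
    then show ?thesis using shift_coord_neq[of j v k s t] j len k 3 s by auto
  qed
qed

text \<open>The word v and its mate w = v - t e_k have the same number of neighbours one layer up.
  Translation by t e_k maps those of w other than w - t e_k injectively to those of v other than
  v + t e_k, so if v + t e_k is one layer up, then so is w - t e_k.\<close>

lemma lev_shift_coord_reflect:
  assumes mates: "mates v w" and w: "w = shift_coord v k (-t)"
    and k: "k < n" and t: "t = 1 \<or> t = -1" and up: "lev (shift_coord v k t) = lev v + 1"
  shows "lev (shift_coord w k (-t)) = lev v + 1"
proof (rule ccontr)
  assume not_up: "lev (shift_coord w k (-t)) \<noteq> lev v + 1"
  have len: "length v = n" using mates by (simp add: mates_def adjG_def)
  have len_w: "length w = n" using len w by simp
  have w_back: "shift_coord w k t = v" using w len k by (simp add: shift_coord_shift_coord)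
  define a where "a = shift_coord v k t"
  define A where "A = {y. adjG n v y \<and> lev y = lev v + 1}"
  define B where "B = {y. adjG n w y \<and> lev y = lev v + 1}"
  have "card A = card B"
    unfolding A_def B_def using mates len len_w lev_le_radius[of a] up
    by (intro card_nbrs_eq) (auto simp: mates_def a_def)
  have finite_A: "finite A"
    unfolding A_def by (rule finite_subset[OF _ finite_adjG[of n v]]) auto
  have a_in_A: "a \<in> A" unfolding A_def a_def using adjG_shift_coord[OF len k t] up by simp
  have inj: "inj_on (\<lambda>y. shift_coord y k t) B"
    using shift_coord_cancel k by (auto simp: inj_on_def B_def adjG_def)
  have "(\<lambda>y. shift_coord y k t) ` B \<subseteq> A - {a}"
  proof clarify
    fix y assume "y \<in> B"
    then have adj: "adjG n w y" and lev_y: "lev y = lev v + 1" by (auto simp: B_def)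
    obtain j s where j: "j < n" and s: "s = 1 \<or> s = -1" and y: "y = shift_coord w j s"
      using adjG_imp_shift_coord[OF adj] .
    have "s = t \<or> s = -t" using s t by auto
    then consider "j = k" "s = t" | "j = k" "s = -t" | "j \<noteq> k" by blast
    then show "shift_coord y k t \<in> A - {a}"
    proof cases
      case 1
      then show ?thesis using lev_y y w_back by simp
    next
      case 2
      then show ?thesis using lev_y y not_up by simp
    next
      case 3
      have "mates (shift_coord v j s) y"
        using mates_shift_coord[OF mates w k _ j 3 s] t y by auto
      moreover have "shift_coord y k t = shift_coord v j s"
        unfolding y using shift_coord_commute[of j w k s t] j len_w k w_back by simp
      ultimately show ?thesis
        using adjG_shift_coord[OF len j s] lev_y shift_coord_neq[of j v k s t] j len k 3 s
        by (auto simp: A_def a_def mates_def)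
    qed
  qed
  then have "card B \<le> card (A - {a})" using inj finite_A by (intro card_inj_on_le) auto
  also have "\<dots> < card A" using finite_A a_in_A by (rule card_Diff1_less)
  finally show False using \<open>card A = card B\<close> by simp
qed

end

locale slice_crc = all_ones_crc +
  assumes n_pos: "n \<ge> 1"
    and zero_in_code: "replicate n 0 \<in> C"
    and minus_unitv_in_code: "smul (-1) (unitv n (n - Suc 0)) \<in> C"
begin

text \<open>The last coordinate index is written n - Suc 0, the simp normal form of n - 1.\<close>

abbreviation m :: nat where
  "m \<equiv> n - Suc 0"

lemma m_less: "m < n"
  using n_pos by simp

lemma mates_last_coord_zero:
  "length h = n \<Longrightarrow> h ! m = 0 \<Longrightarrow> mates h (shift_coord h m (-1))"
proof (induction "\<Sum>i<n. nat \<bar>h ! i\<bar>" arbitrary: h rule: less_induct)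
  case less
  show ?case
  proof (cases "\<forall>i<n. h ! i = 0")
    case True
    then have h: "h = replicate n 0" by (intro nth_equalityI) (auto simp: less.prems)
    have "smul (-1) (unitv n m) = shift_coord h m (-1)"
      by (rule nth_equalityI) (auto simp: h smul_def unitv_def nth_shift_coord m_less)
    then have "lev h = 0" "lev (shift_coord h m (-1)) = 0"
      using lev_code zero_in_code minus_unitv_in_code h by auto
    moreover have "adjG n h (shift_coord h m (-1))"
      using less.prems m_less by (intro adjG_shift_coord) auto
    ultimately show ?thesis by (simp add: mates_def)
  next
    case False
    then obtain k where k: "k < n" "h ! k \<noteq> 0" by auto
    have "k \<noteq> m" using less.prems k by auto
    define \<sigma> where "\<sigma> = sgn (h ! k)"
    have \<sigma>: "\<sigma> = 1 \<or> \<sigma> = -1" using k by (auto simp: \<sigma>_def sgn_if)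
    define h' where "h' = shift_coord h k (-\<sigma>)"
    have len': "length h' = n" using less.prems by (simp add: h'_def)
    have "(\<Sum>i<n. nat \<bar>h' ! i\<bar>) < (\<Sum>i<n. nat \<bar>h ! i\<bar>)"
    proof (rule sum_strict_mono_ex1)
      show "\<forall>i\<in>{..<n}. nat \<bar>h' ! i\<bar> \<le> nat \<bar>h ! i\<bar>"
        using less.prems k by (auto simp: h'_def nth_shift_coord \<sigma>_def sgn_if)
      show "\<exists>i\<in>{..<n}. nat \<bar>h' ! i\<bar> < nat \<bar>h ! i\<bar>"
        using less.prems k
        by (auto simp: h'_def nth_shift_coord \<sigma>_def sgn_if intro!: bexI[of _ k])
    qed simp
    moreover have "h' ! m = 0"
      using \<open>k \<noteq> m\<close> less.prems k by (simp add: h'_def nth_shift_coord)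
    ultimately have "mates h' (shift_coord h' m (-1))" using less.hyps len' by blast
    then have "mates (shift_coord h' k \<sigma>) (shift_coord (shift_coord h' m (-1)) k \<sigma>)"
      using \<open>k \<noteq> m\<close> by (intro mates_shift_coord[OF _ refl m_less _ k(1) _ \<sigma>]) auto
    moreover have "shift_coord h' k \<sigma> = h"
      using less.prems k by (simp add: h'_def shift_coord_shift_coord)
    moreover have "shift_coord (shift_coord h' m (-1)) k \<sigma> = shift_coord h m (-1)"
      using shift_coord_commute[of m h' k "-1" \<sigma>] len' k m_less calculation(2) by simp
    ultimately show ?thesis by simp
  qed
qed

lemma mates_slice_pair: "length x = n \<Longrightarrow> mates (x[m := 2 * z]) (x[m := 2 * z - 1])"
proof (induction z rule: int_induct[where k = 0])
  case base
  then have "mates (x[m := 0]) (shift_coord (x[m := 0]) m (-1))"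
    using m_less by (intro mates_last_coord_zero) auto
  then show ?case using base m_less by simp
next
  case (step1 z)
  have "mates (shift_coord (x[m := 2 * z]) m (- (-1)))
      (shift_coord (x[m := 2 * z]) m (-2 * (-1)))"
    using step1 m_less by (intro mates_reflect) auto
  then have "mates (x[m := 2 * (z + 1)]) (x[m := 2 * (z + 1) - 1])"
    using step1 m_less mates_sym by (simp add: algebra_simps)
  then show ?case .
next
  case (step2 z)
  have "mates (x[m := 2 * z - 1]) (shift_coord (x[m := 2 * z - 1]) m 1)"
    using mates_sym[OF step2(2)] step2 m_less by simp
  then have "mates (shift_coord (x[m := 2 * z - 1]) m (-1))
      (shift_coord (x[m := 2 * z - 1]) m (-2 * 1))"
    using m_less step2 by (intro mates_reflect) auto
  then have "mates (x[m := 2 * (z - 1)]) (x[m := 2 * (z - 1) - 1])"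
    using step2 m_less by (simp add: algebra_simps)
  then show ?case .
qed

definition pair_lev :: "int list \<Rightarrow> int \<Rightarrow> nat" where
  "pair_lev x z = lev (x[m := 2 * z])"

lemma lev_update_last:
  assumes len: "length x = n"
  shows "lev (x[m := c]) = pair_lev x ((c + 1) div 2)"
proof (cases "even c")
  case True
  then show ?thesis by (auto simp: pair_lev_def elim!: evenE)
next
  case False
  then obtain b where c: "c = 2 * b + 1" by (rule oddE)
  then have "c = 2 * (b + 1) - 1" by simp
  then have "lev (x[m := c]) = lev (x[m := 2 * (b + 1) - 1])" by (simp only:)
  also have "\<dots> = pair_lev x (b + 1)"
    using mates_slice_pair[OF len, of "b + 1"] unfolding mates_def pair_lev_def by simp
  also have "b + 1 = (c + 1) div 2" using c by presburger
  finally show ?thesis .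
qed

lemma pair_lev_adjacent:
  "length x = n \<Longrightarrow>
    pair_lev x (z + 1) = pair_lev x z + 1 \<or> pair_lev x z = pair_lev x (z + 1) + 1"
proof -
  assume len: "length x = n"
  define a where "a = x[m := 2 * z]"
  define b where "b = shift_coord a m 1"
  have b: "b = x[m := 2 * z + 1]" using len m_less by (simp add: a_def b_def)
  have adj: "adjG n a b" unfolding b_def using len m_less a_def by (intro adjG_shift_coord) auto
  have lev_a: "lev a = pair_lev x z" by (simp add: a_def pair_lev_def)
  have div: "(2 * z + 1 + 1) div 2 = z + 1" by presburger
  have lev_b: "lev b = pair_lev x (z + 1)"
    unfolding b using lev_update_last[OF len, of "2 * z + 1"] unfolding div .
  have "lev b \<noteq> lev a"
  proof
    assume "lev b = lev a"
    then have "b = x[m := 2 * z - 1]"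
      using adj mates_unique mates_slice_pair[OF len, of z] by (auto simp: mates_def a_def)
    then have "b ! m = x[m := 2 * z - 1] ! m" by simp
    then show False using len m_less by (simp add: b)
  qed
  then show ?thesis using lev_adjG[OF adj] lev_a lev_b by linarith
qed

lemma pair_lev_flanks: "length x = n \<Longrightarrow> pair_lev x (z + 1) = pair_lev x (z - 1)"
proof -
  assume len: "length x = n"
  have div: "(2 * z + 1 + 1) div 2 = z + 1" "(2 * z - 1 + 1) div 2 = z"
    "(2 * z - 2 + 1) div 2 = z - 1"
    by presburger+
  have lev_odd: "lev (x[m := 2 * z + 1]) = pair_lev x (z + 1)"
    "lev (x[m := 2 * z - 1]) = pair_lev x z" "lev (x[m := 2 * z - 2]) = pair_lev x (z - 1)"
    using lev_update_last[OF len, of "2 * z + 1"] lev_update_last[OF len, of "2 * z - 1"]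
      lev_update_last[OF len, of "2 * z - 2"] unfolding div .
  have up: "pair_lev x (z - 1) = pair_lev x z + 1" if "pair_lev x (z + 1) = pair_lev x z + 1"
  proof -
    have "lev (shift_coord (x[m := 2 * z - 1]) m (-1)) = lev (x[m := 2 * z]) + 1"
      using that lev_odd len m_less
      by (intro lev_shift_coord_reflect[where t = 1] mates_slice_pair) (auto simp: pair_lev_def)
    then show ?thesis using lev_odd len m_less by (simp add: pair_lev_def algebra_simps)
  qed
  have down: "pair_lev x (z + 1) = pair_lev x z + 1" if "pair_lev x (z - 1) = pair_lev x z + 1"
  proof -
    have "lev (shift_coord (x[m := 2 * z]) m (- (-1))) = lev (x[m := 2 * z - 1]) + 1"
      using that lev_odd len m_less mates_sym[OF mates_slice_pair[OF len, of z]]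
      by (intro lev_shift_coord_reflect[where t = "-1"]) (auto simp: algebra_simps)
    then show ?thesis using lev_odd len m_less by (simp add: algebra_simps)
  qed
  show ?thesis
    using up down pair_lev_adjacent[OF len, of z] pair_lev_adjacent[OF len, of "z - 1"] by fastforce
qed

lemma pair_lev_parity:
  "length x = n \<Longrightarrow> pair_lev x z = (if even z then pair_lev x 0 else pair_lev x 1)"
proof -
  assume len: "length x = n"
  let ?p = "\<lambda>z :: int. if even z then pair_lev x 0 else pair_lev x 1"
  have "pair_lev x z = ?p z \<and> pair_lev x (z + 1) = ?p (z + 1)"
  proof (induction z rule: int_induct[where k = 0])
    case (step1 z)
    then show ?case using pair_lev_flanks[OF len, of "z + 1"] by (auto simp: add.assoc)
  next
    case (step2 z)
    then show ?case using pair_lev_flanks[OF len, of z] by auto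
  qed simp
  then show ?thesis by simp
qed

lemma vadd_smul_unitv_last:
  "length x = n \<Longrightarrow> vadd x (smul t (unitv n m)) = x[m := x ! m + t]"
  using vadd_smul_unitv[OF _ m_less] by (simp add: shift_coord_def)

lemma nline_eq:
  assumes "length x = n"
  shows "nline n x = range (\<lambda>c. x[m := c])"
proof -
  have "nline n x = {x[m := x ! m + t] | t. True}"
    unfolding nline_def One_nat_def vadd_smul_unitv_last[OF assms] ..
  also have "\<dots> = range (\<lambda>c. x[m := c])"
    by (auto intro!: exI[of _ "c - x ! m" for c])
  finally show ?thesis .
qed

lemma lev_update_last_parity:
  assumes "length x = n" "even ((c' + 1) div 2 - (c + 1) div 2)"
  shows "lev (x[m := c']) = lev (x[m := c])"
  using assms lev_update_last pair_lev_parity by auto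

lemma slice_pair_same_layer:
  assumes "x \<in> vtx n" "even (x ! m)"
  shows "\<exists>i\<le>\<rho>. x \<in> layer n C i \<and> vadd x (smul (-1) (unitv n m)) \<in> layer n C i"
proof -
  have len: "length x = n" using assms by (simp add: vtx_def)
  obtain z where z: "x ! m = 2 * z" using assms by (elim evenE)
  then have "x = x[m := 2 * z]" by (metis list_update_id)
  then have "lev (x[m := 2 * z - 1]) = lev x"
    using mates_slice_pair[OF len, of z] by (simp add: mates_def)
  moreover have "vadd x (smul (-1) (unitv n m)) = x[m := 2 * z - 1]"
    using len z by (simp add: vadd_smul_unitv_last)
  ultimately show ?thesis using len lev_le_radius[OF len] by (auto simp: mem_layer_iff)
qed

lemma layer_nline_closed:
  assumes "x \<in> vtx n" and y: "y \<in> layer n C i \<inter> nline n x"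
  shows "vadd y (smul 4 (unitv n m)) \<in> layer n C i \<inter> nline n x
       \<and> vadd y (smul (-4) (unitv n m)) \<in> layer n C i \<inter> nline n x
       \<and> partner n y \<in> layer n C i \<inter> nline n x"
proof -
  have len: "length x = n" using assms by (simp add: vtx_def)
  obtain c where c: "y = x[m := c]" using y by (auto simp: nline_eq[OF len])
  have lev_y: "lev (x[m := c]) = i" using y c by (simp add: mem_layer_iff)
  have closed: "x[m := c + d] \<in> layer n C i \<inter> nline n x"
    if "even ((c + d + 1) div 2 - (c + 1) div 2)" for d
    using lev_update_last_parity[OF len that] lev_y len by (simp add: mem_layer_iff nline_eq)
  have vadd_y: "vadd y (smul t (unitv n m)) = x[m := c + t]" for t
    using c len m_less by (simp add: vadd_smul_unitv_last)
  have "partner n y = x[m := c + (if even c then -1 else 1)]"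
    using c len m_less vadd_unitv[of y n m]
    by (simp add: partner_def vadd_smul_unitv_last shift_coord_def)
  moreover have "even ((c + (if even c then -1 else 1) + 1) div 2 - (c + 1) div 2)" by presburger
  moreover have "even ((c + 4 + 1) div 2 - (c + 1) div 2)"
    "even ((c + -4 + 1) div 2 - (c + 1) div 2)"
    by presburger+
  ultimately show ?thesis using closed vadd_y by metis
qed

lemma nline_alternates:
  assumes "x \<in> vtx n"
  shows "\<exists>i<\<rho>. \<exists>r::int. \<forall>s::int.
    (let k = (if even (s + r) then i else i + 1) in
       vadd x (smul (2 * s - x ! m) (unitv n m)) \<in> layer n C k
     \<and> vadd x (smul (2 * s - 1 - x ! m) (unitv n m)) \<in> layer n C k)"
proof -
  have len: "length x = n" using assms by (simp add: vtx_def)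
  define i where "i = min (pair_lev x 0) (pair_lev x 1)"
  define r :: int where "r = (if pair_lev x 0 = i then 0 else 1)"
  have adjacent: "pair_lev x 1 = pair_lev x 0 + 1 \<or> pair_lev x 0 = pair_lev x 1 + 1"
    using pair_lev_adjacent[OF len, of 0] by simp
  have "i < \<rho>"
    using adjacent lev_le_radius[of "x[m := 0]"] lev_le_radius[of "x[m := 2]"] len
    by (auto simp: i_def pair_lev_def)
  moreover have "vadd x (smul (2 * s - x ! m) (unitv n m)) \<in> layer n C (if even (s + r) then i else i + 1)
    \<and> vadd x (smul (2 * s - 1 - x ! m) (unitv n m)) \<in> layer n C (if even (s + r) then i else i + 1)"
    for s
  proof -
    have "pair_lev x s = (if even (s + r) then i else i + 1)"
      using pair_lev_parity[OF len, of s] adjacent by (auto simp: i_def r_def)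
    moreover have "(2 * s - 1 + 1) div 2 = s" by simp
    ultimately have "lev (x[m := 2 * s]) = (if even (s + r) then i else i + 1)"
      "lev (x[m := 2 * s - 1]) = (if even (s + r) then i else i + 1)"
      using lev_update_last[OF len, of "2 * s - 1"] by (simp_all add: pair_lev_def)
    then show ?thesis
      unfolding vadd_smul_unitv_last[OF len] using len by (simp add: mem_layer_iff)
  qed
  ultimately show ?thesis unfolding Let_def by blast
qed

end

theorem mainTheorem8:
  fixes n \<rho> :: nat and C :: "int list set"
  assumes "n \<ge> 1"
    and "all_ones_CRC n C \<rho>"
    and "replicate n 0 \<in> C"
    and "smul (-1) (unitv n (n - 1)) \<in> C"
  shows
    "(\<forall>x\<in>vtx n. even (x ! (n - 1)) \<longrightarrow>
        (\<exists>i\<le>\<rho>. x \<in> layer n C i \<and> vadd x (smul (-1) (unitv n (n - 1))) \<in> layer n C i))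
   \<and> (\<forall>x\<in>vtx n. \<forall>i. layer n C i \<inter> nline n x \<noteq> {} \<longrightarrow>
        (\<forall>y\<in>layer n C i \<inter> nline n x.
            vadd y (smul 4 (unitv n (n - 1))) \<in> layer n C i \<inter> nline n x
          \<and> vadd y (smul (-4) (unitv n (n - 1))) \<in> layer n C i \<inter> nline n x
          \<and> partner n y \<in> layer n C i \<inter> nline n x))
   \<and> (\<forall>x\<in>vtx n. \<exists>i<\<rho>. \<exists>r::int. \<forall>s::int.
        (let k = (if even (s + r) then i else i + 1) in
           vadd x (smul (2 * s - x ! (n - 1)) (unitv n (n - 1))) \<in> layer n C k
         \<and> vadd x (smul (2 * s - 1 - x ! (n - 1)) (unitv n (n - 1))) \<in> layer n C k))"
proof -
  interpret slice_crc n \<rho> C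
    using assms by unfold_locales (simp_all add: all_ones_crc_def)
  have "n - 1 = m" by simp
  then show ?thesis
    using slice_pair_same_layer layer_nline_closed nline_alternates by auto
qed

end
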